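(* Work on the event that, for every level $m\in\{1,\dots,\overline m_T\}$ introduced by the GSR algorithm, the batch generated when level $m$ was introduced contains a task $i_m$ with $U^\star-U^{(i_m)}\le\epsilon^U_m$. Define $U^{\max}_t:=\max_{i\in\mathcal I_t}U^{(i)}$ and let $m_t$ be the algorithm's level at round $t$. Then for every $t$, $$U^\star-U^{\max}_t\le\epsilon^U_{\min\{m_t,m^\star\}}.$$ In particular $U^\star-U^{\max}_t\le\epsilon^U_{m_t}$ before level $m^\star$ is reached, and $U^\star-U^{\max}_t\le\epsilon^U_{m^\star}$ at all rounds after level $m^\star$ is introduced.
   Context: Tasks have long-run values $U^{(i)}\in[0,1]$, $U^\star:=\sup_iU^{(i)}$; $\epsilon^U_m:=\epsilon^U_02^{-m}$ with $\epsilon^U_0=1$. The GSR algorithm maintains a set $\mathcal I_t$ of instantiated tasks (tasks are only added, never removed) and a nondecreasing level counter $m_t\in\{0,\dots,\overline m_T\}$ starting at $0$; each time the level increases to $m$ a batch of new tasks is added to the set. $m^\star\in\{0,\dots,\overline m_T\}$ is a fixed target level. *)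

theory Defs
  imports Complex_Main
begin

text \<open>Accuracy schedule: epsilon^U_m = epsilon^U_0 * 2^(-m) with epsilon^U_0 = 1.\<close>
definition epsU :: "nat \<Rightarrow> real" where
  "epsU m = 1 / 2 ^ m"

definition Ustar :: "('a \<Rightarrow> real) \<Rightarrow> real" where
  "Ustar U = (SUP i. U i)"

definition Umax :: "('a \<Rightarrow> real) \<Rightarrow> 'a set \<Rightarrow> real" where
  "Umax U S = Max (U ` S)"

end

theory Submission
  imports Defs
begin

text \<open>The gap between U* and the best instantiated task is at most epsU (m t) at every round:
  at level 0 this is the trivial bound 1, the gap never grows because tasks are never removed,
  and whenever the level rises to k the new batch contains a task within epsU k of U*.
  Since epsU is antitone, epsU (m t) \<le> epsU (min (m t) m*).\<close>

lemma epsU_antimono: "a \<le> b \<Longrightarrow> epsU b \<le> epsU a"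
  unfolding epsU_def by (simp add: power_increasing divide_left_mono)

lemma epsU_0 [simp]: "epsU 0 = 1"
  by (simp add: epsU_def)

lemma Ustar_le: "(\<And>i. U i \<le> c) \<Longrightarrow> Ustar U \<le> c"
  unfolding Ustar_def by (rule cSUP_least) auto

lemma Umax_ge: "finite S \<Longrightarrow> i \<in> S \<Longrightarrow> U i \<le> Umax U S"
  unfolding Umax_def by (rule Max_ge) auto

lemma Umax_mono: "finite T \<Longrightarrow> S \<noteq> {} \<Longrightarrow> S \<subseteq> T \<Longrightarrow> Umax U S \<le> Umax U T"
  unfolding Umax_def by (rule Max_mono) auto

lemma Umax_nonneg: "finite S \<Longrightarrow> S \<noteq> {} \<Longrightarrow> (\<And>i. 0 \<le> U i) \<Longrightarrow> 0 \<le> Umax U S"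
  by (metis Umax_ge all_not_in_conv order_trans)

lemma gap_le_epsU_level:
  fixes U :: "'a \<Rightarrow> real"
  assumes U_range: "\<And>i. 0 \<le> U i \<and> U i \<le> 1"
    and I_fin: "\<And>t. finite (I t)"
    and I_ne: "\<And>t. I t \<noteq> {}"
    and I_mono: "\<And>t. I t \<subseteq> I (Suc t)"
    and m_0: "m 0 = 0"
    and m_mono: "\<And>t. m t \<le> m (Suc t)"
    and batch_added: "\<And>t. m (Suc t) \<noteq> m t \<Longrightarrow> B (m (Suc t)) \<subseteq> I (Suc t)"
    and good_batch: "\<And>t. 1 \<le> m t \<Longrightarrow> \<exists>i\<in>B (m t). Ustar U - U i \<le> epsU (m t)"
  shows "Ustar U - Umax U (I t) \<le> epsU (m t)"
proof (induction t)
  case 0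
  have "Ustar U \<le> 1" using U_range by (intro Ustar_le) blast
  moreover have "0 \<le> Umax U (I 0)" using U_range by (intro Umax_nonneg I_fin I_ne) blast
  ultimately show ?case using m_0 by simp
next
  case (Suc t)
  show ?case
  proof (cases "m (Suc t) = m t")
    case True
    have "Umax U (I t) \<le> Umax U (I (Suc t))" by (intro Umax_mono I_fin I_ne I_mono)
    then show ?thesis using Suc.IH True by simp
  next
    case False
    then have "1 \<le> m (Suc t)" using m_mono[of t] by simp
    then obtain i where "i \<in> B (m (Suc t))" and close: "Ustar U - U i \<le> epsU (m (Suc t))"
      using good_batch by blast
    then have "i \<in> I (Suc t)" using batch_added[OF False] by blast
    then have "U i \<le> Umax U (I (Suc t))" by (intro Umax_ge I_fin)
    then show ?thesis using close by linarith
  qed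
qed

theorem lemmaC20:
  fixes U :: "'a \<Rightarrow> real"
    and I :: "nat \<Rightarrow> 'a set"
    and m :: "nat \<Rightarrow> nat"
    and B :: "nat \<Rightarrow> 'a set"
    and mbar mstar :: nat
  assumes U_range: "\<And>i. 0 \<le> U i \<and> U i \<le> 1"
    and I_fin: "\<And>t. finite (I t)"
    and I_ne: "\<And>t. I t \<noteq> {}"
    and I_mono: "\<And>t. I t \<subseteq> I (Suc t)"
    and m_0: "m 0 = 0"
    and m_mono: "\<And>t. m t \<le> m (Suc t)"
    and m_bound: "\<And>t. m t \<le> mbar"
    and batch_added: "\<And>t. m (Suc t) \<noteq> m t \<Longrightarrow> B (m (Suc t)) \<subseteq> I (Suc t)"
    and mstar_le: "mstar \<le> mbar"
    and good_event: "\<And>k. 1 \<le> k \<Longrightarrow> k \<le> mbar \<Longrightarrow> \<exists>i\<in>B k. Ustar U - U i \<le> epsU k"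
  shows "\<forall>t. Ustar U - Umax U (I t) \<le> epsU (min (m t) mstar)
           \<and> (m t < mstar \<longrightarrow> Ustar U - Umax U (I t) \<le> epsU (m t))
           \<and> (mstar \<le> m t \<longrightarrow> Ustar U - Umax U (I t) \<le> epsU mstar)"
proof (intro allI)
  fix t
  have gap: "Ustar U - Umax U (I t) \<le> epsU (m t)"
    using U_range I_fin I_ne I_mono m_0 m_mono batch_added
  proof (rule gap_le_epsU_level)
    show "\<exists>i\<in>B (m t). Ustar U - U i \<le> epsU (m t)" if "1 \<le> m t" for t
      using good_event[OF that m_bound] .
  qed
  moreover have "epsU (m t) \<le> epsU (min (m t) mstar)" by (rule epsU_antimono) simp
  moreover have "mstar \<le> m t \<Longrightarrow> epsU (m t) \<le> epsU mstar" by (rule epsU_antimono)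
  ultimately show "Ustar U - Umax U (I t) \<le> epsU (min (m t) mstar)
           \<and> (m t < mstar \<longrightarrow> Ustar U - Umax U (I t) \<le> epsU (m t))
           \<and> (mstar \<le> m t \<longrightarrow> Ustar U - Umax U (I t) \<le> epsU mstar)"
    by auto
qed

end
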